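(* Under the hypotheses and notation of the following setting: $M_1,M_2$ are commuting $2$-qubit Hermitian unitaries whose joint $+1$ eigenspace is spanned by the unit vector $\ket\psi$; $M_0=I\otimes I$, $M_3=M_1M_2$; $M_j=I\otimes N_{j0}+X\otimes N_{j1}+Y\otimes N_{j2}+Z\otimes N_{j3}$; $c_j=\tfrac12\operatorname{tr}(N_{j3})$; $p_\pm=\frac{1\pm(c_1+c_2+c_3)}{2}$. For a $2\times 2$ matrix $A$ let $A^\circ=A-\tfrac12\operatorname{tr}(A)I$ denote its traceless part, and define $$M_+=\frac{1}{2p_+}\sum_{j=1}^3\big(N_{j0}+N_{j3}\big)^\circ\ (\text{if }p_+>0),\qquad M_-=\frac{1}{2p_-}\sum_{j=1}^3\big(N_{j0}-N_{j3}\big)^\circ\ (\text{if }p_->0).$$ Then if the first qubit of $\ket\psi$ is measured in the computational basis and outcome $+1$ occurs, the post-measurement state is $\ket0\otimes\ket{\phi_+}$ with $\ket{\phi_+}\bra{\phi_+}=\tfrac12(I+M_+)$; if outcome $-1$ occurs, the post-measurement state is $\ket1\otimes\ket{\phi_-}$ with $\ket{\phi_-}\bra{\phi_-}=\tfrac12(I+M_-)$. In particular $M_\pm$ are Hermitian unitaries having $\ket{\phi_\pm}$ as $+1$ eigenvector.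
   Context: $X,Y,Z$ are the Pauli matrices. The post-measurement state for outcome $+1$ is $(\ket0\bra0\otimes I)\ket\psi/\sqrt{p_+}$ and for outcome $-1$ is $(\ket1\bra1\otimes I)\ket\psi/\sqrt{p_-}$. *)

theory Defs
  imports "HOL-Analysis.Analysis"
begin

text \<open>One-qubit objects: vectors complex^2, matrices complex^2^2 (index 0 = |0>, 1 = |1>).
Two-qubit objects: index type 2 \<times> 2 (first component = first qubit).\<close>

type_synonym qmat1 = "complex^2^2"
type_synonym qvec1 = "complex^2"
type_synonym qmat2 = "complex^(2\<times>2)^(2\<times>2)"
type_synonym qvec2 = "complex^(2\<times>2)"

definition cadj :: "complex^'n^'m \<Rightarrow> complex^'m^'n" where
  "cadj A = (\<chi> i j. cnj (A $ j $ i))"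

definition hermitian :: "complex^'n^'n \<Rightarrow> bool" where
  "hermitian A \<longleftrightarrow> cadj A = A"

definition unitary :: "complex^'n^'n \<Rightarrow> bool" where
  "unitary A \<longleftrightarrow> A ** cadj A = mat 1 \<and> cadj A ** A = mat 1"

definition ctrace :: "complex^'n^'n \<Rightarrow> complex" where
  "ctrace A = (\<Sum>i\<in>UNIV. A $ i $ i)"

definition cmscale :: "complex \<Rightarrow> complex^'n^'m \<Rightarrow> complex^'n^'m" where
  "cmscale c A = (\<chi> i j. c * A $ i $ j)"

definition traceless :: "qmat1 \<Rightarrow> qmat1" where
  "traceless A = A - cmscale (ctrace A / 2) (mat 1)"

definition kron :: "qmat1 \<Rightarrow> qmat1 \<Rightarrow> qmat2" where
  "kron A B = (\<chi> p q. A $ fst p $ fst q * B $ snd p $ snd q)"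

definition kvec :: "qvec1 \<Rightarrow> qvec1 \<Rightarrow> qvec2" where
  "kvec u v = (\<chi> p. u $ fst p * v $ snd p)"

definition outer :: "complex^'n \<Rightarrow> complex^'n \<Rightarrow> complex^'n^'n" where
  "outer u v = (\<chi> i j. u $ i * cnj (v $ j))"

definition ket0 :: qvec1 where "ket0 = (\<chi> i. if i = 0 then 1 else 0)"
definition ket1 :: qvec1 where "ket1 = (\<chi> i. if i = 1 then 1 else 0)"

definition Id2 :: qmat1 where "Id2 = mat 1"
definition PauliX :: qmat1 where
  "PauliX = (\<chi> i j. if i \<noteq> j then 1 else 0)"
definition PauliY :: qmat1 where
  "PauliY = (\<chi> i j. if i = 0 \<and> j = 1 then - \<i> else if i = 1 \<and> j = 0 then \<i> else 0)"
definition PauliZ :: qmat1 where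
  "PauliZ = (\<chi> i j. if i = j then (if i = 0 then 1 else -1) else 0)"

definition pauli_decomp :: "qmat2 \<Rightarrow> (nat \<Rightarrow> qmat1) \<Rightarrow> bool" where
  "pauli_decomp M N \<longleftrightarrow>
     M = kron Id2 (N 0) + kron PauliX (N 1) + kron PauliY (N 2) + kron PauliZ (N 3)"

definition cval :: "(nat \<Rightarrow> nat \<Rightarrow> qmat1) \<Rightarrow> nat \<Rightarrow> complex" where
  "cval N j = ctrace (N j 3) / 2"
definition pplus :: "(nat \<Rightarrow> nat \<Rightarrow> qmat1) \<Rightarrow> complex" where
  "pplus N = (1 + (cval N 1 + cval N 2 + cval N 3)) / 2"
definition pminus :: "(nat \<Rightarrow> nat \<Rightarrow> qmat1) \<Rightarrow> complex" where
  "pminus N = (1 - (cval N 1 + cval N 2 + cval N 3)) / 2"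
definition Mplus :: "(nat \<Rightarrow> nat \<Rightarrow> qmat1) \<Rightarrow> qmat1" where
  "Mplus N = cmscale (1 / (2 * pplus N)) (\<Sum>j\<in>{1,2,3}. traceless (N j 0 + N j 3))"
definition Mminus :: "(nat \<Rightarrow> nat \<Rightarrow> qmat1) \<Rightarrow> qmat1" where
  "Mminus N = cmscale (1 / (2 * pminus N)) (\<Sum>j\<in>{1,2,3}. traceless (N j 0 - N j 3))"

end

theory Submission
  imports Defs
begin

text \<open>Commuting Hermitian unitaries are commuting involutions, so \<open>(I + M1)(I + M2)/4\<close> is the
projector onto their joint \<open>+1\<close> eigenspace, i.e. \<open>I + M1 + M2 + M3 = 4 |\<psi>\<rangle>\<langle>\<psi>|\<close>. The
\<open>|b\<rangle>\<langle>b|\<close> diagonal block of this identity in the first qubit reads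
\<open>I + \<Sum>j (Nj0 \<plusminus> Nj3) = 4 |a\<^sub>b\<rangle>\<langle>a\<^sub>b|\<close>, where \<open>a\<^sub>b\<close> is the half of \<open>\<psi>\<close> with first qubit \<open>b\<close>.
Taking traces of the two blocks gives \<open>p\<^sub>\<plusminus> = \<parallel>a\<^sub>b\<parallel>\<^sup>2\<close>, and the traceless part of a block
is \<open>2p(2|\<phi>\<rangle>\<langle>\<phi>| - I)\<close> for the normalised \<open>\<phi> = a\<^sub>b/\<surd>p\<close>, so \<open>M\<^sub>\<plusminus>\<close> is the reflection
\<open>2|\<phi>\<rangle>\<langle>\<phi>| - I\<close>.\<close>

definition cinner :: "complex^'n \<Rightarrow> complex^'n \<Rightarrow> complex" where
  "cinner u v = (\<Sum>i\<in>UNIV. cnj (u $ i) * v $ i)"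

lemma cinner_adj: "cinner u (A *v v) = cinner (cadj A *v u) v"
  unfolding cinner_def matrix_vector_mult_def cadj_def
  by (simp add: sum_distrib_left sum_distrib_right mult_ac) (rule sum.swap)

lemma cinner_add_right: "cinner u (x + y) = cinner u x + cinner u y"
  unfolding cinner_def by (simp add: distrib_left sum.distrib)

lemma cinner_scale_left: "cinner (c *s u) v = cnj c * cinner u v"
  unfolding cinner_def by (simp add: sum_distrib_left mult_ac)

lemma cinner_scale_right: "cinner u (c *s v) = c * cinner u v"
  unfolding cinner_def by (simp add: sum_distrib_left mult_ac)

lemma norm_power2_vec: "(norm (x :: complex^'n))\<^sup>2 = (\<Sum>i\<in>UNIV. (cmod (x $ i))\<^sup>2)"
  by (simp add: norm_vec_def L2_set_def sum_nonneg)

lemma cinner_self: "cinner x x = of_real ((norm (x :: complex^'n))\<^sup>2)"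
  unfolding norm_power2_vec cinner_def of_real_sum
  by (intro sum.cong refl) (metis complex_norm_square mult.commute of_real_power)

lemma cmscale_matrix_mult: "cmscale a A ** cmscale b B = cmscale (a * b) (A ** B)"
  unfolding cmscale_def matrix_matrix_mult_def vec_eq_iff
  by (simp add: sum_distrib_left mult_ac)

lemma cmscale_mult_vector: "cmscale c A *v v = c *s (A *v v)"
  unfolding cmscale_def matrix_vector_mult_def vec_eq_iff
  by (simp add: sum_distrib_left mult_ac)

lemma matrix_add_rdistrib: "(A + B) ** C = A ** C + B ** C"
  unfolding matrix_matrix_mult_def vec_eq_iff by (simp add: distrib_right sum.distrib)

lemma matrix_diff_rdistrib: "(A - B) ** (C :: 'a::ring_1^'n^'k) = A ** C - B ** C"
  unfolding matrix_matrix_mult_def vec_eq_iff by (simp add: left_diff_distrib sum_subtractf)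

lemma matrix_diff_ldistrib: "(A :: 'a::ring_1^'n^'k) ** (B - C) = A ** B - A ** C"
  unfolding matrix_matrix_mult_def vec_eq_iff by (simp add: right_diff_distrib sum_subtractf)

lemma outer_mult_vector: "outer u v *v w = cinner v w *s u"
  unfolding vec_eq_iff outer_def matrix_vector_mult_def cinner_def
  by (simp add: sum_distrib_left mult_ac)

lemma outer_mult_outer: "outer u v ** outer w x = cmscale (cinner v w) (outer u x)"
  unfolding vec_eq_iff outer_def matrix_matrix_mult_def cinner_def cmscale_def
  by (simp add: sum_distrib_left sum_distrib_right mult_ac)

lemma outer_scale: "outer (c *s u) (d *s v) = cmscale (c * cnj d) (outer u v)"
  unfolding vec_eq_iff outer_def cmscale_def by (simp add: mult_ac)

lemma reflection_unit_vector:
  fixes phi :: "complex^'n"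
  assumes unit: "cinner phi phi = 1"
  defines "R \<equiv> cmscale 2 (outer phi phi) - mat 1"
  shows "outer phi phi = cmscale (1/2) (mat 1 + R)" and "hermitian R" and "unitary R"
    and "R *v phi = phi"
proof -
  show "outer phi phi = cmscale (1/2) (mat 1 + R)"
    unfolding R_def vec_eq_iff cmscale_def by simp
  show herm: "hermitian R"
    unfolding hermitian_def R_def vec_eq_iff cadj_def cmscale_def outer_def mat_def by simp
  have idem: "outer phi phi ** outer phi phi = outer phi phi"
    using unit by (simp add: outer_mult_outer cmscale_def)
  have "R ** R = cmscale 4 (outer phi phi) - cmscale 2 (outer phi phi)
      - cmscale 2 (outer phi phi) + mat 1"
    unfolding R_def by (simp add: matrix_diff_ldistrib matrix_diff_rdistrib cmscale_matrix_mult idem)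
  also have "\<dots> = mat 1"
    by (simp add: vec_eq_iff cmscale_def)
  finally have "R ** R = mat 1" .
  then show "unitary R"
    using herm unfolding unitary_def hermitian_def by simp
  show "R *v phi = phi"
    using unit unfolding R_def
    by (simp add: matrix_vector_mult_diff_rdistrib cmscale_mult_vector outer_mult_vector)
      (simp add: vec_eq_iff)
qed

lemma hermitian_unitary_square: "hermitian M \<Longrightarrow> unitary M \<Longrightarrow> M ** M = mat 1"
  unfolding hermitian_def unitary_def by metis

lemma involution_fixes_range_of_plus_id:
  "M ** M = mat 1 \<Longrightarrow> M *v ((mat 1 + M) *v x) = (mat 1 + M) *v x"
  by (simp add: matrix_vector_mult_add_rdistrib matrix_vector_right_distrib
      matrix_vector_mul_assoc add.commute)

lemma joint_eigenspace_projector: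
  fixes M1 M2 :: "complex^'n^'n" and psi :: "complex^'n"
  assumes h1: "hermitian M1" and u1: "unitary M1"
    and h2: "hermitian M2" and u2: "unitary M2"
    and comm: "M1 ** M2 = M2 ** M1"
    and unit: "norm psi = 1"
    and joint: "{v. M1 *v v = v \<and> M2 *v v = v} = {c *s psi | c. True}"
  shows "(mat 1 + M1) ** (mat 1 + M2) = cmscale 4 (outer psi psi)"
proof -
  have sq1: "M1 ** M1 = mat 1" and sq2: "M2 ** M2 = mat 1"
    using h1 u1 h2 u2 by (simp_all add: hermitian_unitary_square)
  have "psi = 1 *s psi"
    by simp
  then have "psi \<in> {c *s psi | c. True}"
    by blast
  then have fix1: "M1 *v psi = psi" and fix2: "M2 *v psi = psi"
    using joint by blast+
  have psi_psi: "cinner psi psi = 1"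
    using unit by (simp add: cinner_self)
  have inv1: "cinner psi (M1 *v y) = cinner psi y" for y
    using h1 fix1 by (simp add: cinner_adj hermitian_def)
  have inv2: "cinner psi (M2 *v y) = cinner psi y" for y
    using h2 fix2 by (simp add: cinner_adj hermitian_def)
  have "(mat 1 + M1) *v ((mat 1 + M2) *v v) = cmscale 4 (outer psi psi) *v v" for v
  proof -
    let ?w = "(mat 1 + M1) *v ((mat 1 + M2) *v v)"
    have "M1 *v ?w = ?w"
      using sq1 by (rule involution_fixes_range_of_plus_id)
    moreover have "M2 ** (mat 1 + M1) = (mat 1 + M1) ** M2"
      by (simp add: matrix_add_ldistrib matrix_add_rdistrib comm)
    then have "M2 *v ?w = (mat 1 + M1) *v (M2 *v ((mat 1 + M2) *v v))"
      by (simp add: matrix_vector_mul_assoc matrix_mul_assoc)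
    then have "M2 *v ?w = ?w"
      using sq2 involution_fixes_range_of_plus_id by metis
    ultimately obtain c where w: "?w = c *s psi"
      using joint by blast
    have "c = cinner psi ?w"
      using w psi_psi by (simp add: cinner_scale_right)
    also have "\<dots> = 4 * cinner psi v"
      by (simp add: matrix_vector_mult_add_rdistrib cinner_add_right inv1 inv2)
    finally show ?thesis
      using w by (simp add: cmscale_mult_vector outer_mult_vector)
  qed
  then show ?thesis
    by (simp add: matrix_eq matrix_vector_mul_assoc)
qed

lemma UNIV_2_eq: "(UNIV :: 2 set) = {0, 1}"
proof -
  have "(2 :: 2) = 0" by simp
  with UNIV_2 show ?thesis by (simp add: insert_commute)
qed

lemma all_2: "(\<forall>b :: 2. P b) \<longleftrightarrow> P 0 \<and> P 1"
  by (metis UNIV_2_eq UNIV_I insertE singletonD)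

lemma sum_UNIV_2: "sum f (UNIV :: 2 set) = f 0 + f 1"
  by (simp add: UNIV_2_eq)

lemma ctrace_add: "ctrace (A + B) = ctrace A + ctrace B"
  unfolding ctrace_def by (simp add: sum.distrib)

lemma ctrace_diff: "ctrace (A - B) = ctrace A - ctrace B"
  unfolding ctrace_def by (simp add: sum_subtractf)

lemma ctrace_sum: "ctrace (\<Sum>i\<in>I. A i) = (\<Sum>i\<in>I. ctrace (A i))"
  unfolding ctrace_def by (induction I rule: infinite_finite_induct) (simp_all add: sum.distrib)

lemma ctrace_cmscale: "ctrace (cmscale c A) = c * ctrace A"
  unfolding ctrace_def cmscale_def by (simp add: sum_distrib_left)

lemma ctrace_outer: "ctrace (outer u v) = cinner v u"
  unfolding ctrace_def outer_def cinner_def by (simp add: mult.commute)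

lemma ctrace_mat1_qubit: "ctrace (mat 1 :: qmat1) = 2"
  by (simp add: ctrace_def sum_UNIV_2 mat_def)

lemma traceless_add: "traceless (A + B) = traceless A + traceless B"
  unfolding traceless_def vec_eq_iff cmscale_def by (simp add: ctrace_add algebra_simps)

lemma traceless_sum: "traceless (\<Sum>i\<in>I. A i) = (\<Sum>i\<in>I. traceless (A i))"
proof (induction I rule: infinite_finite_induct)
  case (infinite I)
  then show ?case by (simp add: traceless_def vec_eq_iff cmscale_def ctrace_def)
next
  case empty
  then show ?case by (simp add: traceless_def vec_eq_iff cmscale_def ctrace_def)
next
  case (insert i I)
  then show ?case by (simp add: traceless_add)
qed

lemma traceless_of_rank_one_identity:
  fixes S :: qmat1
  assumes "mat 1 + S = cmscale 4 (outer a a)"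
  shows "traceless S = cmscale 4 (outer a a) - cmscale (2 * cinner a a) (mat 1)"
proof -
  have S: "S = cmscale 4 (outer a a) - mat 1"
    using assms by (simp add: algebra_simps)
  then have tr: "ctrace S = 4 * cinner a a - 2"
    by (simp add: ctrace_diff ctrace_cmscale ctrace_outer ctrace_mat1_qubit)
  show ?thesis
    unfolding traceless_def tr unfolding S by (simp add: vec_eq_iff cmscale_def mat_def field_simps)
qed

definition qubit_block :: "2 \<Rightarrow> qvec2 \<Rightarrow> qvec1" where
  "qubit_block b psi = (\<chi> j. psi $ (b, j))"

definition diag_block :: "2 \<Rightarrow> qmat2 \<Rightarrow> qmat1" where
  "diag_block b M = (\<chi> j l. M $ (b, j) $ (b, l))"

lemma diag_block_add: "diag_block b (M + M') = diag_block b M + diag_block b M'"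
  unfolding diag_block_def vec_eq_iff by simp

lemma diag_block_mat1: "diag_block b (mat 1) = mat 1"
  unfolding diag_block_def vec_eq_iff by (simp add: mat_def)

lemma diag_block_outer:
  "diag_block b (cmscale c (outer psi psi)) = cmscale c (outer (qubit_block b psi) (qubit_block b psi))"
  unfolding diag_block_def qubit_block_def vec_eq_iff cmscale_def outer_def by simp

lemma diag_block_pauli_decomp:
  assumes "pauli_decomp M Q"
  shows "diag_block 0 M = Q 0 + Q 3" and "diag_block 1 M = Q 0 - Q 3"
  using assms unfolding pauli_decomp_def diag_block_def vec_eq_iff
  by (simp_all add: kron_def Id2_def PauliX_def PauliY_def PauliZ_def mat_def)

lemma diagonal_blocks_of_projector_identity:
  fixes N :: "nat \<Rightarrow> nat \<Rightarrow> qmat1"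
  assumes dec1: "pauli_decomp M1 (N 1)" and dec2: "pauli_decomp M2 (N 2)"
    and dec3: "pauli_decomp (M1 ** M2) (N 3)"
    and proj: "(mat 1 + M1) ** (mat 1 + M2) = cmscale 4 (outer psi psi)"
  shows "mat 1 + (\<Sum>j\<in>{1,2,3}. N j 0 + N j 3)
      = cmscale 4 (outer (qubit_block 0 psi) (qubit_block 0 psi))"
    and "mat 1 + (\<Sum>j\<in>{1,2,3}. N j 0 - N j 3)
      = cmscale 4 (outer (qubit_block 1 psi) (qubit_block 1 psi))"
proof -
  have "mat 1 + M1 + M2 + M1 ** M2 = (mat 1 + M1) ** (mat 1 + M2)"
    by (simp add: matrix_add_ldistrib matrix_add_rdistrib add_ac)
  then have sum: "mat 1 + M1 + M2 + M1 ** M2 = cmscale 4 (outer psi psi)"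
    using proj by simp
  note diag_blocks = diag_block_add diag_block_mat1 diag_block_outer
    diag_block_pauli_decomp[OF dec1] diag_block_pauli_decomp[OF dec2]
    diag_block_pauli_decomp[OF dec3]
  show "mat 1 + (\<Sum>j\<in>{1,2,3}. N j 0 + N j 3)
      = cmscale 4 (outer (qubit_block 0 psi) (qubit_block 0 psi))"
    using arg_cong[OF sum, of "diag_block 0"] by (simp add: diag_blocks add_ac)
  show "mat 1 + (\<Sum>j\<in>{1,2,3}. N j 0 - N j 3)
      = cmscale 4 (outer (qubit_block 1 psi) (qubit_block 1 psi))"
    using arg_cong[OF sum, of "diag_block 1"] by (simp add: diag_blocks add_ac)
qed

lemma sum_UNIV_2x2: "sum f (UNIV :: (2 \<times> 2) set) = (\<Sum>b\<in>UNIV. \<Sum>j\<in>UNIV. f (b, j))"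
  by (simp flip: UNIV_Times_UNIV add: sum.cartesian_product)

lemma power2_norm_qubit_blocks:
  "(norm psi)\<^sup>2 = (norm (qubit_block 0 psi))\<^sup>2 + (norm (qubit_block 1 psi))\<^sup>2"
  unfolding norm_power2_vec sum_UNIV_2x2 sum_UNIV_2 qubit_block_def by simp

lemma power2_norm_kvec: "(norm (kvec u v))\<^sup>2 = (norm u)\<^sup>2 * (norm v)\<^sup>2"
  unfolding norm_power2_vec sum_UNIV_2x2 kvec_def
  by (simp add: norm_mult power_mult_distrib sum_product)

lemma norm_ket0: "norm ket0 = 1" and norm_ket1: "norm ket1 = 1"
  by (simp_all add: norm_vec_def L2_set_def sum_UNIV_2 ket0_def ket1_def)

lemma kvec_scale: "c *s kvec u v = kvec u (c *s v)"
  unfolding kvec_def vec_eq_iff by (simp add: mult.left_commute)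

lemma measure_first_qubit:
  "kron (outer ket0 ket0) Id2 *v psi = kvec ket0 (qubit_block 0 psi)"
  "kron (outer ket1 ket1) Id2 *v psi = kvec ket1 (qubit_block 1 psi)"
  unfolding vec_eq_iff matrix_vector_mult_def sum_UNIV_2x2 sum_UNIV_2
  by (simp_all add: split_paired_All kron_def outer_def kvec_def qubit_block_def
      ket0_def ket1_def Id2_def mat_def all_2)

lemma outcome_probabilities:
  fixes N :: "nat \<Rightarrow> nat \<Rightarrow> qmat1"
  assumes plus: "mat 1 + (\<Sum>j\<in>{1,2,3}. N j 0 + N j 3) = cmscale 4 (outer a a)"
    and minus: "mat 1 + (\<Sum>j\<in>{1,2,3}. N j 0 - N j 3) = cmscale 4 (outer b b)"
    and total: "cinner a a + cinner b b = 1"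
  shows "pplus N = cinner a a" and "pminus N = cinner b b"
proof -
  define t0 where "t0 = ctrace (\<Sum>j\<in>{1,2,3}. N j 0)"
  define t3 where "t3 = ctrace (\<Sum>j\<in>{1,2,3}. N j 3)"
  have "ctrace (mat 1 + (\<Sum>j\<in>{1,2,3}. N j 0 + N j 3)) = 2 + t0 + t3"
    unfolding t0_def t3_def by (simp add: ctrace_add ctrace_mat1_qubit sum.distrib)
  then have tr_plus: "2 + t0 + t3 = 4 * cinner a a"
    unfolding plus by (simp add: ctrace_cmscale ctrace_outer)
  have "ctrace (mat 1 + (\<Sum>j\<in>{1,2,3}. N j 0 - N j 3)) = 2 + t0 - t3"
    unfolding t0_def t3_def by (simp add: ctrace_add ctrace_diff ctrace_mat1_qubit sum_subtractf)
  then have tr_minus: "2 + t0 - t3 = 4 * cinner b b"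
    unfolding minus by (simp add: ctrace_cmscale ctrace_outer)
  have "cval N 1 + cval N 2 + cval N 3 = t3 / 2"
    unfolding cval_def t3_def ctrace_sum by (simp add: add_divide_distrib)
  moreover have "t3 = 2 * (cinner a a - cinner b b)" \<comment> \<open>the total trace forces \<open>t0 = 0\<close>\<close>
    using tr_plus tr_minus total by algebra
  ultimately show "pplus N = cinner a a" and "pminus N = cinner b b"
    unfolding pplus_def pminus_def using total by algebra+
qed

lemma post_measurement_state:
  fixes S :: qmat1 and a ket :: qvec1
  assumes block: "mat 1 + S = cmscale 4 (outer a a)"
    and pos: "(norm a)\<^sup>2 > 0"
    and M: "M = cmscale (1 / (2 * of_real ((norm a)\<^sup>2))) (traceless S)"
  shows "\<exists>phi. (1 / csqrt (of_real ((norm a)\<^sup>2))) *s kvec ket a = kvec ket phi \<and>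
    outer phi phi = cmscale (1/2) (Id2 + M) \<and> hermitian M \<and> unitary M \<and> M *v phi = phi"
proof -
  define q where "q = (norm a)\<^sup>2"
  define s where "s = (of_real (sqrt q) :: complex)"
  define phi where "phi = (1 / s) *s a"
  have aa: "cinner a a = of_real q"
    unfolding q_def by (rule cinner_self)
  have q: "(of_real q :: complex) \<noteq> 0"
    using pos unfolding q_def by simp
  have s: "cnj s = s" "s * s = of_real q" "csqrt (of_real q) = s"
    using pos unfolding s_def q_def by (simp_all add: csqrt_of_real power2_eq_square)
  have unit: "cinner phi phi = 1"
    using q s unfolding phi_def cinner_scale_left cinner_scale_right aa
    by (simp add: field_simps)
  have "outer phi phi = cmscale (1 / of_real q) (outer a a)"
    using s unfolding phi_def outer_scale by simp
  then have "M = cmscale 2 (outer phi phi) - mat 1"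
    using q unfolding M traceless_of_rank_one_identity[OF block] q_def[symmetric] aa
    by (simp add: vec_eq_iff cmscale_def mat_def field_simps)
  moreover have "(1 / csqrt (of_real q)) *s kvec ket a = kvec ket phi"
    using s unfolding phi_def by (simp add: kvec_scale)
  ultimately show ?thesis
    unfolding Id2_def q_def[symmetric] using reflection_unit_vector[OF unit] by blast
qed

theorem mainTheorem17:
  fixes M1 M2 :: qmat2 and psi :: qvec2 and N :: "nat \<Rightarrow> nat \<Rightarrow> qmat1"
  assumes herm1: "hermitian M1" and unit1: "unitary M1"
    and herm2: "hermitian M2" and unit2: "unitary M2"
    and comm: "M1 ** M2 = M2 ** M1"
    and psi_unit: "norm psi = 1"
    and joint: "{v. M1 *v v = v \<and> M2 *v v = v} = {c *s psi | c. True}"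
    and dec1: "pauli_decomp M1 (N 1)"
    and dec2: "pauli_decomp M2 (N 2)"
    and dec3: "pauli_decomp (M1 ** M2) (N 3)"
  defines "probplus \<equiv> (norm (kron (outer ket0 ket0) Id2 *v psi))\<^sup>2"
    and "probminus \<equiv> (norm (kron (outer ket1 ket1) Id2 *v psi))\<^sup>2"
    and "postplus \<equiv> (1 / csqrt (pplus N)) *s (kron (outer ket0 ket0) Id2 *v psi)"
    and "postminus \<equiv> (1 / csqrt (pminus N)) *s (kron (outer ket1 ket1) Id2 *v psi)"
  shows "pplus N = complex_of_real probplus \<and> pminus N = complex_of_real probminus \<and>
    (probplus > 0 \<longrightarrow> (\<exists>phi. postplus = kvec ket0 phi \<and>
        outer phi phi = cmscale (1/2) (Id2 + Mplus N) \<and>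
        hermitian (Mplus N) \<and> unitary (Mplus N) \<and> Mplus N *v phi = phi)) \<and>
    (probminus > 0 \<longrightarrow> (\<exists>phi. postminus = kvec ket1 phi \<and>
        outer phi phi = cmscale (1/2) (Id2 + Mminus N) \<and>
        hermitian (Mminus N) \<and> unitary (Mminus N) \<and> Mminus N *v phi = phi))"
proof -
  let ?a = "qubit_block 0 psi" and ?b = "qubit_block 1 psi"
  have "(mat 1 + M1) ** (mat 1 + M2) = cmscale 4 (outer psi psi)"
    using herm1 unit1 herm2 unit2 comm psi_unit joint by (rule joint_eigenspace_projector)
  note blocks = diagonal_blocks_of_projector_identity[OF dec1 dec2 dec3 this]
  have probs: "probplus = (norm ?a)\<^sup>2" "probminus = (norm ?b)\<^sup>2"
    unfolding probplus_def probminus_def measure_first_qubit power2_norm_kvec norm_ket0 norm_ket1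
    by simp_all
  have "cinner ?a ?a + cinner ?b ?b = 1"
    using psi_unit power2_norm_qubit_blocks[of psi] unfolding cinner_self
    by (metis of_real_1 of_real_add power_one)
  then have pplus: "pplus N = of_real probplus" and pminus: "pminus N = of_real probminus"
    using outcome_probabilities[OF blocks] by (simp_all add: probs cinner_self)
  have "Mplus N = cmscale (1 / (2 * of_real probplus)) (traceless (\<Sum>j\<in>{1,2,3}. N j 0 + N j 3))"
    and "Mminus N = cmscale (1 / (2 * of_real probminus)) (traceless (\<Sum>j\<in>{1,2,3}. N j 0 - N j 3))"
    unfolding Mplus_def Mminus_def pplus pminus by (simp_all only: traceless_sum)
  moreover have "postplus = (1 / csqrt (of_real probplus)) *s kvec ket0 ?a"
    and "postminus = (1 / csqrt (of_real probminus)) *s kvec ket1 ?b"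
    unfolding postplus_def postminus_def pplus pminus by (simp_all only: measure_first_qubit)
  ultimately show ?thesis
    unfolding pplus pminus probs
    using post_measurement_state[OF blocks(1) _ refl] post_measurement_state[OF blocks(2) _ refl]
    by simp
qed

end
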